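(* Fix an integer $d\ge1$ and let $S_d=\langle a_0,\dots,a_d,s\mid s a_0 s^{-1}a_0^{-1},\ a_{i+1}a_ia_{i+1}^{-1}a_0^{-1}\ (0\le i<d)\rangle$. For $0\le i<j\le d$ and $n\ge1$ let $f_{i,j}(n)=\tfrac12\,\bigl|\mathrm{vrim}(\mathrm{Fan}(a_i^n,a_j^n))\bigr|$. Then $f_{i,j}(n)$ is a polynomial in $n$ of degree $j$; in fact \[ f_{i,j}(n)=\sum_{k=i+1}^{j}\binom{n+k-1}{n-1}. \]
   Context: Each relator of $S_d$ has the form $\lambda p\lambda^{-1}q^{-1}$ with $(\lambda,p,q)=(s,a_0,a_0)$ or $(a_{i+1},a_i,a_0)$. In the unit square of such a relator in the presentation complex, reading from a corner $B$: $\lambda$ goes from $B$ to $Q$, $p$ from $Q$ to the top corner $T$, $\lambda$ from $R$ to $T$, $q$ from $B$ to $R$; the edges $p,\lambda$ into $T$ are the top edges. The descending link is the graph on the generators in which $u,v$ are adjacent iff some relator square has top edges labeled $u$ and $v$; for $S_d$ it is the path $s - a_0 - a_1 - \cdots - a_d$, and each adjacent pair corresponds to a unique relator. For a relator $e$ put $x_e=q^{-1}\lambda$. Simple fans: $\mathrm{Fan}(a,a)$ is a single edge labeled $a$ (apex at its end), empty rims. For distinct generators $a,b$, let $a=v_0,\dots,v_k=b$ be the path in the descending link, take copies $C_i$ of the relator square with top edges $v_{i-1},v_i$, and glue the top edge $v_i$ of $C_i$ to that of $C_{i+1}$ ($1\le i<k$); the common top corner is the apex. The vertex rim is the concatenation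 of the two-letter words read along the bottom of $C_i$ from the initial vertex of its top edge $v_{i-1}$ to the initial vertex of its top edge $v_i$ (each is $q^{-1}\lambda$ or $\lambda^{-1}q$), so it has the form $a_1^{-1}b_1\cdots a_k^{-1}b_k$; the edge rim replaces $q^{-1}\lambda$ by $x_e$ and $\lambda^{-1}q$ by $x_e^{-1}$. Fans of height $n\ge2$: for positive words $u=au'$, $v=bv'$ of length $n$ with $a,b$ generators, let $F'=\mathrm{Fan}(u',v')$ with vertex rim $a_1^{-1}b_1\cdots a_k^{-1}b_k$, put $b_0=a$, $a_{k+1}=b$, and attach for $i=1,\dots,k+1$ the simple fan $\mathrm{Fan}(b_{i-1},a_i)$ with apex at the rim vertex where the edges $b_{i-1}$ and $a_i$ terminate (for $i=1$, the initial vertex of the side $u'$, the new edge $a$ extending that side; symmetrically for $i=k+1$), identifying its top edges with the corresponding edges. This is $\mathrm{Fan}(u,v)$; its vertex and edge rims are the concatenations of those of the attached simple fans. $|w|$ is the length of a word $w$. *)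

theory Defs
  imports "HOL-Computational_Algebra.Polynomial"
begin

datatype gen = s | a nat

text \<open>Letters of a word: (generator, True) is the generator, (generator, False) its inverse.\<close>
type_synonym letter = "gen \<times> bool"

text \<open>A relator lambda p lambda^-1 q^-1 is encoded by the triple (lambda, p, q).\<close>
type_synonym relator = "gen \<times> gen \<times> gen"

definition rlam :: "relator \<Rightarrow> gen" where "rlam e = fst e"
definition rp :: "relator \<Rightarrow> gen" where "rp e = fst (snd e)"
definition rq :: "relator \<Rightarrow> gen" where "rq e = snd (snd e)"

definition relators :: "nat \<Rightarrow> relator list" where
  "relators d = (s, a 0, a 0) # map (\<lambda>i. (a (Suc i), a i, a 0)) [0..<d]"

definition top_edges :: "relator \<Rightarrow> gen set" where
  "top_edges e = {rp e, rlam e}"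

definition dlink_adj :: "nat \<Rightarrow> gen \<Rightarrow> gen \<Rightarrow> bool" where
  "dlink_adj d u v \<longleftrightarrow> (\<exists>e\<in>set (relators d). top_edges e = {u, v})"

definition rel_of :: "nat \<Rightarrow> gen \<Rightarrow> gen \<Rightarrow> relator" where
  "rel_of d u v = (THE e. e \<in> set (relators d) \<and> top_edges e = {u, v})"

text \<open>The descending link of S_d is the path s - a_0 - a_1 - ... - a_d;
  position of a generator along it, and the path between two generators.\<close>
fun gpos :: "gen \<Rightarrow> nat" where
  "gpos s = 0" | "gpos (a i) = Suc i"

fun gof :: "nat \<Rightarrow> gen" where
  "gof 0 = s" | "gof (Suc i) = a i"

definition link_path :: "gen \<Rightarrow> gen \<Rightarrow> gen list" where
  "link_path x y = map gof (if gpos x \<le> gpos y then [gpos x..<Suc (gpos y)]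
                            else rev [gpos y..<Suc (gpos x)])"

text \<open>Two-letter word read along the bottom of square e from the initial vertex
  of its top edge u to the initial vertex of its other top edge:
  lambda^-1 q if u = p, and q^-1 lambda if u = lambda.\<close>
definition square_piece :: "relator \<Rightarrow> gen \<Rightarrow> letter list" where
  "square_piece e u = (if u = rp e then [(rlam e, False), (rq e, True)]
                       else [(rq e, False), (rlam e, True)])"

text \<open>Vertex rim of the simple fan Fan(x,y) (empty if x = y).\<close>
definition simple_vrim :: "nat \<Rightarrow> gen \<Rightarrow> gen \<Rightarrow> letter list" where
  "simple_vrim d x y = (let P = link_path x y in
      concat (map (\<lambda>(u, v). square_piece (rel_of d u v) u) (zip P (tl P))))"

fun pairs :: "'x list \<Rightarrow> ('x \<times> 'x) list" where
  "pairs (x # y # r) = (x, y) # pairs r"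
| "pairs _ = []"

text \<open>Vertex rim of Fan(u,v) for positive words u, v of equal length n >= 1.
  If the rim of Fan(u',v') is a_1^-1 b_1 ... a_k^-1 b_k, the rim of
  Fan(a u', b v') is the concatenation of the rims of Fan(b_{i-1}, a_i),
  i = 1..k+1, with b_0 = a and a_{k+1} = b.\<close>
fun fan_vrim :: "nat \<Rightarrow> gen list \<Rightarrow> gen list \<Rightarrow> letter list" where
  "fan_vrim d [x] [y] = simple_vrim d x y"
| "fan_vrim d (x # u') (y # v') =
     (let r = fan_vrim d u' v';
          seq = x # map fst r @ [y]
      in concat (map (\<lambda>(g, h). simple_vrim d g h) (pairs seq)))"
| "fan_vrim d _ _ = []"

definition f_ij :: "nat \<Rightarrow> nat \<Rightarrow> nat \<Rightarrow> nat \<Rightarrow> real" where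
  "f_ij d i j n = real (length (fan_vrim d (replicate n (a i)) (replicate n (a j)))) / 2"

end

theory Submission
  imports Defs
begin

text \<open>For m < d the square with top edges a_m, a_(m+1) is the relator (a_(m+1), a_m, a_0),
  so the simple fan Fan(a_x, a_y) with x <= y has vertex rim a_(x+1)^-1 a_0 ... a_y^-1 a_0.
  Passing from height n to n + 1, the first piece of the rim stays a_(i+1)^-1 a_0, every further
  piece a_(k+1)^-1 a_0 is replaced by the k + 1 pieces of Fan(a_0, a_(k+1)), and the j pieces of
  Fan(a_0, a_j) are appended. Counting the pieces after repeated replacement with the
  hockey-stick identity gives the sum of C(n+k-1, n-1) over k = i+1..j, and
  C(n+k-1, n-1) = n(n+1)...(n+k-1)/k! is a polynomial in n of degree k.\<close>

text \<open>Index k stands for the rim piece a_(k+1)^-1 a_0.\<close>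
definition rim_word :: "nat list \<Rightarrow> letter list" where
  "rim_word ks = concat (map (\<lambda>k. [(a (Suc k), False), (a 0, True)]) ks)"

lemma length_rim_word: "length (rim_word ks) = 2 * length ks"
  by (induction ks) (auto simp: rim_word_def)

lemma rim_word_append: "rim_word (ks @ ls) = rim_word ks @ rim_word ls"
  by (simp add: rim_word_def)

lemma rim_word_concat: "rim_word (concat kss) = concat (map rim_word kss)"
  by (induction kss) (simp_all add: rim_word_def)

lemma map_fst_rim_word: "map fst (rim_word ks) = concat (map (\<lambda>k. [a (Suc k), a 0]) ks)"
  by (induction ks) (auto simp: rim_word_def)

lemma rel_of_a_Suc:
  assumes "m < d"
  shows "rel_of d (a m) (a (Suc m)) = (a (Suc m), a m, a 0)"
  unfolding rel_of_def
proof (rule the_equality)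
  show "(a (Suc m), a m, a 0) \<in> set (relators d) \<and>
      top_edges (a (Suc m), a m, a 0) = {a m, a (Suc m)}"
    using assms by (auto simp: relators_def top_edges_def rp_def rlam_def)
next
  fix e assume "e \<in> set (relators d) \<and> top_edges e = {a m, a (Suc m)}"
  then show "e = (a (Suc m), a m, a 0)"
    by (auto simp: relators_def top_edges_def rp_def rlam_def doubleton_eq_iff)
qed

lemma link_path_a: "x \<le> y \<Longrightarrow> link_path (a x) (a y) = map a [x..<Suc y]"
  by (simp del: upt_Suc add: link_path_def map_Suc_upt[symmetric] comp_def)

lemma zip_tl_map_upt:
  "x \<le> y \<Longrightarrow> zip (map f [x..<Suc y]) (tl (map f [x..<Suc y])) = map (\<lambda>m. (f m, f (Suc m))) [x..<y]"
  by (rule nth_equalityI) (auto simp: nth_tl simp del: upt_Suc)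

lemma simple_vrim_a:
  assumes "x \<le> y" "y \<le> d"
  shows "simple_vrim d (a x) (a y) = rim_word [x..<y]"
proof -
  have "simple_vrim d (a x) (a y) =
      concat (map (\<lambda>m. square_piece (rel_of d (a m) (a (Suc m))) (a m)) [x..<y])"
    using assms by (simp del: upt_Suc add: simple_vrim_def link_path_a zip_tl_map_upt comp_def)
  also have "\<dots> = rim_word [x..<y]"
    unfolding rim_word_def using assms
    by (intro arg_cong[where f = concat] map_cong)
      (auto simp: rel_of_a_Suc square_piece_def rp_def rlam_def rq_def)
  finally show ?thesis .
qed

definition rim_expand :: "nat list \<Rightarrow> nat list" where
  "rim_expand ks = concat (map (\<lambda>k. [0..<Suc k]) ks)"

fun fan_tail :: "nat \<Rightarrow> nat \<Rightarrow> nat \<Rightarrow> nat list" where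
  "fan_tail i j 0 = [Suc i..<j]"
| "fan_tail i j (Suc n) = rim_expand (fan_tail i j n) @ [0..<j]"

lemma fan_tail_less: "k \<in> set (fan_tail i j n) \<Longrightarrow> k < j"
  by (induction n arbitrary: k) (fastforce simp: rim_expand_def)+

lemma pairs_interleaved:
  "pairs (x # concat (map (\<lambda>k. [f k, x]) ks) @ [y]) = map (\<lambda>k. (x, f k)) ks @ [(x, y)]"
  by (induction ks) auto

lemma fan_vrim_replicate:
  assumes "i < j" "j \<le> d"
  shows "fan_vrim d (replicate (Suc n) (a i)) (replicate (Suc n) (a j)) = rim_word (i # fan_tail i j n)"
proof (induction n)
  case 0
  then show ?case
    using assms by (simp del: upt_Suc add: simple_vrim_a upt_conv_Cons)
next
  case (Suc n)
  let ?T = "fan_tail i j n"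
  have "pairs (a i # map fst (rim_word (i # ?T)) @ [a j])
      = (a i, a (Suc i)) # map (\<lambda>k. (a 0, a (Suc k))) ?T @ [(a 0, a j)]"
    using pairs_interleaved[of "a 0" "\<lambda>k. a (Suc k)" ?T "a j"] by (simp add: map_fst_rim_word)
  moreover have "simple_vrim d (a 0) (a (Suc k)) = rim_word [0..<Suc k]" if "k \<in> set ?T" for k
    using assms fan_tail_less[OF that] by (simp del: upt_Suc add: simple_vrim_a)
  ultimately have "fan_vrim d (replicate (Suc (Suc n)) (a i)) (replicate (Suc (Suc n)) (a j))
      = rim_word [i] @ concat (map (\<lambda>k. rim_word [0..<Suc k]) ?T) @ rim_word [0..<j]"
    using Suc assms
    by (simp del: upt_Suc replicate.simps
        add: replicate_Suc Let_def simple_vrim_a upt_conv_Cons cong: map_cong)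
  also have "\<dots> = rim_word ([i] @ rim_expand ?T @ [0..<j])"
    by (simp only: rim_word_append rim_expand_def rim_word_concat map_map comp_def)
  finally show ?case by simp
qed

text \<open>Under t further expansions the index k becomes (t + k) choose t indices.\<close>
lemma sum_list_choose_rim_expand:
  "(\<Sum>k\<leftarrow>rim_expand ks. (t + k) choose t) = (\<Sum>k\<leftarrow>ks. (Suc t + k) choose Suc t)"
proof (induction ks)
  case (Cons k ks)
  have "(\<Sum>l\<leftarrow>[0..<Suc k]. (t + l) choose t) = (Suc t + k) choose Suc t"
    using choose_rising_sum(1)[of t k]
    by (simp del: upt_Suc add: interv_sum_list_conv_sum_set_nat atLeast0AtMost[symmetric]
        atLeastLessThanSuc_atLeastAtMost)
  with Cons show ?case by (simp del: upt_Suc add: rim_expand_def)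
qed (simp add: rim_expand_def)

lemma sum_list_choose_fan_tail:
  "(\<Sum>k\<leftarrow>fan_tail i j n. (t + k) choose t)
    = (\<Sum>k=Suc i..<j. (t + n + k) choose (t + n)) + (\<Sum>q<n. (t + q + j) choose Suc (t + q))"
proof (induction n arbitrary: t)
  case 0
  then show ?case by (simp add: interv_sum_list_conv_sum_set_nat)
next
  case (Suc n)
  have "(\<Sum>k\<leftarrow>[0..<j]. (t + k) choose t) = (t + j) choose Suc t"
    using sum_list_choose_rim_expand[of t "[j - 1]"]
    by (cases j) (simp_all del: upt_Suc add: rim_expand_def)
  moreover have "(\<Sum>q<Suc n. (t + q + j) choose Suc (t + q))
      = ((t + j) choose Suc t) + (\<Sum>q<n. (Suc t + q + j) choose Suc (Suc t + q))"
    by (subst sum.lessThan_Suc_shift) simp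
  ultimately show ?case
    using Suc[of "Suc t"]
    by (simp del: upt_Suc binomial_Suc_Suc sum.lessThan_Suc add: sum_list_choose_rim_expand)
qed

lemma length_fan_tail:
  assumes "i < j"
  shows "Suc (length (fan_tail i j n)) = (\<Sum>k=Suc i..j. (n + k) choose n)"
proof -
  have "(\<Sum>q<n. (q + j) choose Suc q) + 1 = (n + j) choose n"
    by (induction n) auto
  moreover have "length (fan_tail i j n) =
      (\<Sum>k=Suc i..<j. (n + k) choose n) + (\<Sum>q<n. (q + j) choose Suc q)"
    using sum_list_choose_fan_tail[of 0 i j n] by (simp add: sum_list_triv)
  ultimately show ?thesis
    using assms by (simp add: atLeastLessThanSuc_atLeastAtMost[symmetric] sum.atLeastLessThan_Suc)
qed

lemma f_ij_Suc:
  assumes "i < j" "j \<le> d"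
  shows "f_ij d i j (Suc n) = (\<Sum>k=Suc i..j. real ((n + k) choose n))"
proof -
  have "f_ij d i j (Suc n) = real (Suc (length (fan_tail i j n)))"
    unfolding f_ij_def fan_vrim_replicate[OF assms] length_rim_word by simp
  then show ?thesis
    using length_fan_tail[OF assms(1), of n] by simp
qed

definition multichoose_poly :: "nat \<Rightarrow> real poly" where
  "multichoose_poly k = smult (inverse (fact k)) (\<Prod>l<k. [:of_nat l, 1:])"

lemma degree_multichoose_poly: "degree (multichoose_poly k) = k"
proof -
  have "degree (\<Prod>l<k. [:of_nat l, 1:] :: real poly) = (\<Sum>l<k. degree ([:of_nat l, 1:] :: real poly))"
    by (rule degree_prod_eq_sum_degree) auto
  then show ?thesis by (simp add: multichoose_poly_def)
qed

lemma poly_multichoose_poly: "poly (multichoose_poly k) (real (Suc n)) = real ((n + k) choose n)"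
proof -
  have "poly (multichoose_poly k) (real (Suc n)) = pochhammer (real n + 1) k / fact k"
    by (simp add: multichoose_poly_def poly_prod pochhammer_prod lessThan_atLeast0 field_simps
        ac_simps)
  also have "\<dots> = real (n + k) gchoose k"
    by (simp add: gbinomial_pochhammer' of_nat_diff)
  also have "\<dots> = real ((n + k) choose k)"
    by (simp add: binomial_gbinomial)
  also have "(n + k) choose k = (n + k) choose n"
    by (subst binomial_symmetric) simp_all
  finally show ?thesis .
qed

lemma degree_sum_multichoose_poly:
  assumes "i < j"
  shows "degree (\<Sum>k=Suc i..j. multichoose_poly k) = j"
proof -
  have "degree (\<Sum>k=Suc i..<j. multichoose_poly k) \<le> j - 1"
    by (rule degree_sum_le) (auto simp: degree_multichoose_poly)
  then have "degree (\<Sum>k=Suc i..<j. multichoose_poly k) < degree (multichoose_poly j)"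
    using assms by (simp add: degree_multichoose_poly)
  then show ?thesis
    using assms
    by (simp add: atLeastLessThanSuc_atLeastAtMost[symmetric] sum.atLeastLessThan_Suc
        degree_add_eq_right degree_multichoose_poly)
qed

theorem mainTheorem5:
  fixes d i j :: nat
  assumes "d \<ge> 1" and "i < j" and "j \<le> d"
  shows "(\<exists>P :: real poly. degree P = j \<and> (\<forall>n\<ge>1. f_ij d i j n = poly P (real n)))
       \<and> (\<forall>n\<ge>1. f_ij d i j n = (\<Sum>k=i+1..j. real ((n + k - 1) choose (n - 1))))"
proof -
  let ?P = "\<Sum>k=Suc i..j. multichoose_poly k"
  have "f_ij d i j n = (\<Sum>k=i+1..j. real ((n + k - 1) choose (n - 1)))
      \<and> f_ij d i j n = poly ?P (real n)" if "n \<ge> 1" for n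
  proof -
    obtain m where "n = Suc m" using \<open>n \<ge> 1\<close> by (cases n) auto
    then show ?thesis
      using assms by (simp del: of_nat_Suc add: f_ij_Suc poly_sum poly_multichoose_poly)
  qed
  then show ?thesis
    using degree_sum_multichoose_poly[OF \<open>i < j\<close>] by blast
qed

end
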